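(* Let $S$ be a basis of $\mathcal{M}$ with $\det(V_SV_S^\top)>0$ and let $C$ be a minimal $f$-violating cycle in $G(S)$. Then $C$ contains at most one arc of type $\mathrm{II}$.
   Context: Let $v_1,\ldots,v_n\in\mathbb{R}^d$ and $\mathcal{M}=([n],\mathcal{I})$ a matroid; a basis is an independent set of maximum size. For $S\subseteq[n]$, $V_S$ is the $d\times|S|$ matrix with columns $v_i$, $i\in S$; elements are identified with their vectors, and $S-v+u=(S\setminus\{v\})\cup\{u\}$. For a basis $S$ with $\det(V_SV_S^\top)>0$ put $\langle u,v\rangle_S=u^\top(V_SV_S^\top)^{-1}v$, $\|u\|_S^2=\langle u,u\rangle_S$. The exchange graph $G(S)$ is the directed bipartite multigraph on $[n]$ with parts $S$ and $[n]\setminus S$: for $v\in S$, $u\notin S$ there is a backward arc $v\to u$ of weight $0$ whenever $S-v+u\in\mathcal{I}$; for $u\notin S$, $v\in S$ with $S-v+u$ spanning $\mathbb{R}^d$ there are two forward arcs, of type $\mathrm{I}$: $u\xrightarrow{\mathrm{I}}v$ with weight $-\log|\langle u,v\rangle_S|$, and of type $\mathrm{II}$: $u\xrightarrow{\mathrm{II}}v$ with weight $-\log\sqrt{(1+\|u\|_S^2)(1-\|v\|_S^2)}$ (with $-\log 0=+\infty$). For a directed cycle $C$ in $G(S)$, $|C|$ is its number of arcs, $\mathrm{ver}(C)$ its vertex set, and $w(C)$ the sum of its arc weights. Let $f(1)=2$ and $f(i)=(i!)^{11}$ for $i\geq 2$. A cycle $C$ is $f$-violating if $w(C)<-\log f(|C|/2)$;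 it is minimal $f$-violating if it is $f$-violating and no cycle $C'$ in $G(S)$ with $\mathrm{ver}(C')\subsetneq\mathrm{ver}(C)$ is $f$-violating. *)

theory Defs
  imports "HOL-Analysis.Analysis"
begin

definition matroid :: "'a set \<Rightarrow> ('a set \<Rightarrow> bool) \<Rightarrow> bool" where
  "matroid E indep \<longleftrightarrow> finite E \<and>
     (\<forall>X. indep X \<longrightarrow> X \<subseteq> E) \<and> indep {} \<and>
     (\<forall>X Y. indep Y \<and> X \<subseteq> Y \<longrightarrow> indep X) \<and>
     (\<forall>X Y. indep X \<and> indep Y \<and> card X < card Y \<longrightarrow> (\<exists>y\<in>Y - X. indep (insert y X)))"

definition is_basis :: "('a set \<Rightarrow> bool) \<Rightarrow> 'a set \<Rightarrow> bool" where
  "is_basis indep S \<longleftrightarrow> indep S \<and> (\<forall>T. indep T \<longrightarrow> card T \<le> card S)"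

text \<open>V_S V_S^T = sum over i in S of v_i v_i^T.\<close>
definition gram :: "(nat \<Rightarrow> real^'d) \<Rightarrow> nat set \<Rightarrow> real^'d^'d" where
  "gram v S = (\<chi> a b. \<Sum>i\<in>S. v i $ a * v i $ b)"

definition ipS :: "(nat \<Rightarrow> real^'d) \<Rightarrow> nat set \<Rightarrow> real^'d \<Rightarrow> real^'d \<Rightarrow> real" where
  "ipS v S x y = x \<bullet> (matrix_inv (gram v S) *v y)"

definition nrmsqS :: "(nat \<Rightarrow> real^'d) \<Rightarrow> nat set \<Rightarrow> real^'d \<Rightarrow> real" where
  "nrmsqS v S x = ipS v S x x"

definition neglog :: "real \<Rightarrow> ereal" where
  "neglog x = (if x = 0 then \<infinity> else ereal (- ln x))"

datatype arc_type = Back | TypeI | TypeII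

type_synonym arc = "nat \<times> nat \<times> arc_type"

definition tl_of :: "arc \<Rightarrow> nat" where "tl_of e = fst e"
definition hd_of :: "arc \<Rightarrow> nat" where "hd_of e = fst (snd e)"
definition kind_of :: "arc \<Rightarrow> arc_type" where "kind_of e = snd (snd e)"

definition is_arc :: "nat \<Rightarrow> (nat set \<Rightarrow> bool) \<Rightarrow> (nat \<Rightarrow> real^'d) \<Rightarrow> nat set \<Rightarrow> arc \<Rightarrow> bool" where
  "is_arc n indep v S e = (case e of
     (a, b, Back) \<Rightarrow> a \<in> S \<and> b \<in> {0..<n} - S \<and> indep (insert b (S - {a}))
   | (a, b, TypeI) \<Rightarrow> a \<in> {0..<n} - S \<and> b \<in> S \<and> span (v ` insert a (S - {b})) = UNIV
   | (a, b, TypeII) \<Rightarrow> a \<in> {0..<n} - S \<and> b \<in> S \<and> span (v ` insert a (S - {b})) = UNIV)"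

definition arc_weight :: "(nat \<Rightarrow> real^'d) \<Rightarrow> nat set \<Rightarrow> arc \<Rightarrow> ereal" where
  "arc_weight v S e = (case e of
     (a, b, Back) \<Rightarrow> 0
   | (a, b, TypeI) \<Rightarrow> neglog \<bar>ipS v S (v a) (v b)\<bar>
   | (a, b, TypeII) \<Rightarrow> neglog (sqrt ((1 + nrmsqS v S (v a)) * (1 - nrmsqS v S (v b)))))"

definition is_cycle :: "nat \<Rightarrow> (nat set \<Rightarrow> bool) \<Rightarrow> (nat \<Rightarrow> real^'d) \<Rightarrow> nat set \<Rightarrow> arc list \<Rightarrow> bool" where
  "is_cycle n indep v S C \<longleftrightarrow> C \<noteq> [] \<and> (\<forall>e\<in>set C. is_arc n indep v S e) \<and>
     (\<forall>i<length C. hd_of (C ! i) = tl_of (C ! ((i + 1) mod length C))) \<and>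
     distinct (map tl_of C)"

definition ver :: "arc list \<Rightarrow> nat set" where
  "ver C = set (map tl_of C)"

definition cycle_weight :: "(nat \<Rightarrow> real^'d) \<Rightarrow> nat set \<Rightarrow> arc list \<Rightarrow> ereal" where
  "cycle_weight v S C = sum_list (map (arc_weight v S) C)"

definition fbound :: "nat \<Rightarrow> real" where
  "fbound i = (if i = 1 then 2 else (fact i) ^ 11)"

definition f_violating :: "(nat \<Rightarrow> real^'d) \<Rightarrow> nat set \<Rightarrow> arc list \<Rightarrow> bool" where
  "f_violating v S C \<longleftrightarrow> cycle_weight v S C < ereal (- ln (fbound (length C div 2)))"

definition min_f_violating :: "nat \<Rightarrow> (nat set \<Rightarrow> bool) \<Rightarrow> (nat \<Rightarrow> real^'d) \<Rightarrow> nat set \<Rightarrow> arc list \<Rightarrow> bool" where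
  "min_f_violating n indep v S C \<longleftrightarrow> is_cycle n indep v S C \<and> f_violating v S C \<and>
     \<not> (\<exists>C'. is_cycle n indep v S C' \<and> ver C' \<subset> ver C \<and> f_violating v S C')"

end

theory Submission
  imports Defs
begin

text \<open>Suppose the minimal violating cycle C contains two type II arcs u1 \<rightarrow> b1 and
  u2 \<rightarrow> b2. The weight of a type II arc u \<rightarrow> b is a term depending only on u plus a
  term depending only on b, so replacing them by u1 \<rightarrow> b2 and u2 \<rightarrow> b1 preserves the
  total weight while cutting C into two cycles on fewer vertices. Finiteness of the weight
  of C forces \<parallel>b1\<parallel>_S and \<parallel>b2\<parallel>_S below 1, which means that S - b1 and S - b2 still
  span, so the new arcs exist. By minimality the two shorter cycles are not
  violating, and since f(k) f(l) \<le> f(k + l) neither is C.\<close>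

lemma matrix_inv_mult_vec_cancel:
  fixes G :: "real^'d^'d"
  assumes "det G \<noteq> 0"
  shows "G *v (matrix_inv G *v x) = x" "matrix_inv G *v (G *v x) = x"
proof -
  have "\<exists>G'. G ** G' = mat 1 \<and> G' ** G = mat 1"
    using assms invertible_det_nz unfolding invertible_def by blast
  then have "G ** matrix_inv G = mat 1 \<and> matrix_inv G ** G = mat 1"
    unfolding matrix_inv_def by (rule someI_ex)
  then show "G *v (matrix_inv G *v x) = x" "matrix_inv G *v (G *v x) = x"
    by (simp_all add: matrix_vector_mul_assoc)
qed

lemma gram_mult_vec:
  assumes "finite S"
  shows "gram v S *v y = (\<Sum>i\<in>S. (v i \<bullet> y) *\<^sub>R v i)"
  unfolding vec_eq_iff
proof
  fix a
  have "(gram v S *v y) $ a = (\<Sum>b\<in>UNIV. (\<Sum>i\<in>S. v i $ a * v i $ b) * y $ b)"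
    by (simp add: matrix_vector_mult_def gram_def)
  also have "\<dots> = (\<Sum>i\<in>S. (v i \<bullet> y) * v i $ a)"
    by (simp add: sum_distrib_right sum.swap[of _ UNIV S] inner_vec_def sum_distrib_left mult_ac)
  finally show "(gram v S *v y) $ a = (\<Sum>i\<in>S. (v i \<bullet> y) *\<^sub>R v i) $ a"
    by simp
qed

lemma nrmsqS_eq_sum_squares:
  assumes "finite S" "det (gram v S) \<noteq> 0"
  shows "nrmsqS v S x = (\<Sum>i\<in>S. (v i \<bullet> (matrix_inv (gram v S) *v x))\<^sup>2)"
proof -
  define y where "y = matrix_inv (gram v S) *v x"
  have "nrmsqS v S x = (gram v S *v y) \<bullet> y"
    unfolding nrmsqS_def ipS_def y_def
    by (simp add: matrix_inv_mult_vec_cancel[OF assms(2)] inner_commute)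
  also have "\<dots> = (\<Sum>i\<in>S. (v i \<bullet> y)\<^sup>2)"
    by (simp add: gram_mult_vec[OF assms(1)] inner_sum_left power2_eq_square)
  finally show ?thesis unfolding y_def .
qed

lemma nrmsqS_nonneg:
  assumes "finite S" "det (gram v S) \<noteq> 0"
  shows "0 \<le> nrmsqS v S x"
  by (simp add: nrmsqS_eq_sum_squares[OF assms] sum_nonneg)

lemma nrmsqS_le_1:
  assumes "finite S" "det (gram v S) \<noteq> 0" "b \<in> S"
  shows "nrmsqS v S (v b) \<le> 1"
proof -
  define t where "t = nrmsqS v S (v b)"
  have "t = v b \<bullet> (matrix_inv (gram v S) *v v b)"
    unfolding t_def nrmsqS_def ipS_def ..
  moreover have "t = (\<Sum>i\<in>S. (v i \<bullet> (matrix_inv (gram v S) *v v b))\<^sup>2)"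
    unfolding t_def by (rule nrmsqS_eq_sum_squares[OF assms(1,2)])
  ultimately have "t\<^sup>2 \<le> t"
    using member_le_sum[of b S "\<lambda>i. (v i \<bullet> (matrix_inv (gram v S) *v v b))\<^sup>2"] assms(1,3)
    by simp
  then show ?thesis
    unfolding t_def[symmetric]
    by (cases "t \<le> 1") (auto simp: power2_eq_square not_le dest: mult_strict_left_mono[of 1 t t])
qed

text \<open>If S - b does not span, a nonzero w orthogonal to S - b is mapped by the Gram
  matrix to a multiple of v b, which pins \<parallel>b\<parallel>_S to 1.\<close>
lemma span_remove_UNIV_if_nrmsqS_less_1:
  fixes v :: "nat \<Rightarrow> real^'d"
  assumes "finite S" "det (gram v S) \<noteq> 0" "b \<in> S" "nrmsqS v S (v b) < 1"
  shows "span (v ` (S - {b})) = UNIV"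
proof (rule ccontr)
  assume "span (v ` (S - {b})) \<noteq> UNIV"
  then have "dim (v ` (S - {b})) < DIM(real^'d)"
    using dim_eq_full dim_subset_UNIV[of "v ` (S - {b})"] by (metis le_neq_implies_less)
  then obtain w where w: "w \<noteq> 0" "\<And>y. y \<in> span (v ` (S - {b})) \<Longrightarrow> orthogonal w y"
    using orthogonal_to_subspace_exists by blast
  have "v i \<bullet> w = 0" if "i \<in> S - {b}" for i
  proof -
    have "orthogonal w (v i)" using that by (intro w(2) span_base) simp
    then show ?thesis by (simp add: orthogonal_def inner_commute)
  qed
  then have Gw: "gram v S *v w = (v b \<bullet> w) *\<^sub>R v b"
    using assms(1,3) by (simp add: gram_mult_vec sum.remove)
  define c where "c = v b \<bullet> w"
  have "c \<noteq> 0"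
    using Gw w(1) matrix_inv_mult_vec_cancel(2)[OF assms(2), of w] by (auto simp: c_def)
  have "c *\<^sub>R (matrix_inv (gram v S) *v v b) = w"
    using matrix_inv_mult_vec_cancel(2)[OF assms(2), of w]
    by (simp add: Gw c_def[symmetric] matrix_vector_mult_scaleR)
  then have "matrix_inv (gram v S) *v v b = (1 / c) *\<^sub>R w"
    using \<open>c \<noteq> 0\<close> by auto
  then have "nrmsqS v S (v b) = 1"
    using \<open>c \<noteq> 0\<close> by (simp add: nrmsqS_def ipS_def c_def)
  with assms(4) show False by simp
qed

lemma fact_power_mult_le:
  "(fact x) ^ k * (fact y) ^ k \<le> (fact (x + y) :: real) ^ k"
proof -
  have "fact x * fact y \<le> (fact (x + y) :: real)"
    by (metis fact_fact_dvd_fact dvd_imp_le fact_gt_zero of_nat_fact of_nat_le_iff of_nat_mult)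
  then show ?thesis
    by (simp add: power_mono power_mult_distrib[symmetric])
qed

lemma fbound_ge_1: "1 \<le> fbound k"
  unfolding fbound_def by (auto intro!: one_le_power)

lemma fbound_mult_le_add: "fbound x * fbound y \<le> fbound (x + y)"
proof -
  have Suc: "2 * fbound y \<le> fbound (Suc y)" if "2 \<le> y" for y
  proof -
    have "(2::real) \<le> real y + 1" using that by simp
    also have "\<dots> \<le> (real y + 1) ^ 11" by (rule self_le_power) auto
    finally have "2 * fact y ^ 11 \<le> (real y + 1) ^ 11 * (fact y :: real) ^ 11"
      by (intro mult_right_mono) auto
    then show ?thesis
      using that by (simp add: fbound_def power_mult_distrib add.commute)
  qed
  consider "x = 0 \<or> y = 0" | "x = 1" "y = 1" | "x = 1" "2 \<le> y" | "2 \<le> x" "y = 1"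
    | "2 \<le> x" "2 \<le> y"
    by linarith
  then show ?thesis
  proof cases
    case 1
    then show ?thesis by (auto simp: fbound_def)
  next
    case 2
    then show ?thesis by (simp add: fbound_def)
  next
    case 3
    then show ?thesis using Suc[of y] by (simp add: fbound_def)
  next
    case 4
    then show ?thesis using Suc[of x] by (simp add: fbound_def mult.commute)
  next
    case 5
    then show ?thesis using fact_power_mult_le[of x 11 y] by (simp add: fbound_def)
  qed
qed

lemma fbound_mono:
  assumes "x \<le> y"
  shows "fbound x \<le> fbound y"
proof -
  have "fbound x \<le> fbound x * fbound (y - x)"
    using fbound_ge_1[of x] fbound_ge_1[of "y - x"] by simp
  also have "\<dots> \<le> fbound y"
    using fbound_mult_le_add[of x "y - x"] assms by simp
  finally show ?thesis .
qed

lemma fbound_half_mult_le: "fbound (a div 2) * fbound (b div 2) \<le> fbound ((a + b) div 2)"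
  using fbound_mult_le_add[of "a div 2" "b div 2"]
    fbound_mono[of "a div 2 + b div 2" "(a + b) div 2"]
  by linarith

lemma f_violating_split:
  assumes "f_violating v S C"
    and "cycle_weight v S C = cycle_weight v S C\<^sub>1 + cycle_weight v S C\<^sub>2"
    and "length C = length C\<^sub>1 + length C\<^sub>2"
  shows "f_violating v S C\<^sub>1 \<or> f_violating v S C\<^sub>2"
proof (rule ccontr)
  assume not_violating: "\<not> (f_violating v S C\<^sub>1 \<or> f_violating v S C\<^sub>2)"
  define F\<^sub>1 F\<^sub>2 F where "F\<^sub>1 = fbound (length C\<^sub>1 div 2)" and "F\<^sub>2 = fbound (length C\<^sub>2 div 2)"
    and "F = fbound (length C div 2)"
  have pos: "0 < F\<^sub>1" "0 < F\<^sub>2"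
    unfolding F\<^sub>1_def F\<^sub>2_def using fbound_ge_1 less_le_trans zero_less_one by blast+
  have "F\<^sub>1 * F\<^sub>2 \<le> F"
    unfolding F\<^sub>1_def F\<^sub>2_def F_def assms(3) by (rule fbound_half_mult_le)
  then have "ln (F\<^sub>1 * F\<^sub>2) \<le> ln F"
    using pos by (intro ln_mono) auto
  then have "- ln F \<le> - ln F\<^sub>1 - ln F\<^sub>2"
    using pos by (simp add: ln_mult_pos)
  have "ereal (- ln F\<^sub>1) + ereal (- ln F\<^sub>2) \<le> cycle_weight v S C"
    using not_violating unfolding assms(2) by (intro add_mono) (auto simp: f_violating_def F\<^sub>1_def F\<^sub>2_def not_less)
  with \<open>- ln F \<le> - ln F\<^sub>1 - ln F\<^sub>2\<close> have "ereal (- ln F) \<le> cycle_weight v S C"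
    by (metis order_trans ereal_less_eq(3) plus_ereal.simps(1) diff_conv_add_uminus)
  with assms(1) show False by (simp add: f_violating_def F_def)
qed

text \<open>No hypothesis excluding -\<infinity> is needed: in ereal, \<infinity> + -\<infinity> = \<infinity>.\<close>
lemma sum_list_ereal_PInfty: "\<infinity> \<in> set xs \<Longrightarrow> sum_list xs = (\<infinity> :: ereal)"
  by (induction xs) auto

lemma f_violating_arc_weight_finite:
  assumes "f_violating v S C" "e \<in> set C"
  shows "arc_weight v S e \<noteq> \<infinity>"
proof
  assume "arc_weight v S e = \<infinity>"
  then have "cycle_weight v S C = \<infinity>"
    unfolding cycle_weight_def using assms(2) by (intro sum_list_ereal_PInfty) force
  with assms(1) show False by (simp add: f_violating_def)
qed

lemma arc_weight_TypeII:
  assumes "0 \<le> nrmsqS v S (v a)" "nrmsqS v S (v b) < 1"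
  shows "arc_weight v S (a, b, TypeII) =
    ereal (- ln (sqrt (1 + nrmsqS v S (v a))) - ln (sqrt (1 - nrmsqS v S (v b))))"
  using assms by (simp add: arc_weight_def neglog_def real_sqrt_mult ln_mult_pos)

lemma arc_weight_TypeII_exchange:
  assumes "0 \<le> nrmsqS v S (v a\<^sub>1)" "0 \<le> nrmsqS v S (v a\<^sub>2)"
    and "nrmsqS v S (v b\<^sub>1) < 1" "nrmsqS v S (v b\<^sub>2) < 1"
  shows "arc_weight v S (a\<^sub>1, b\<^sub>1, TypeII) + arc_weight v S (a\<^sub>2, b\<^sub>2, TypeII) =
    arc_weight v S (a\<^sub>1, b\<^sub>2, TypeII) + arc_weight v S (a\<^sub>2, b\<^sub>1, TypeII)"
  using assms by (simp add: arc_weight_TypeII)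

lemma nrmsqS_less_1_if_arc_weight_TypeII_finite:
  assumes "finite S" "det (gram v S) \<noteq> 0" "b \<in> S" "arc_weight v S (a, b, TypeII) \<noteq> \<infinity>"
  shows "nrmsqS v S (v b) < 1"
  using nrmsqS_le_1[OF assms(1-3)] assms(4)
  by (auto simp: arc_weight_def neglog_def split: if_splits)

lemma successively_cyclic_conv_nth:
  assumes "xs \<noteq> []"
  shows "(\<forall>i<length xs. P (xs ! i) (xs ! ((i + 1) mod length xs))) \<longleftrightarrow>
    successively P xs \<and> P (last xs) (hd xs)"
proof -
  define m where "m = length xs - 1"
  have m: "length xs = Suc m" using assms by (simp add: m_def)
  have "(\<forall>i<m. P (xs ! i) (xs ! (Suc i mod Suc m))) \<longleftrightarrow> (\<forall>i<m. P (xs ! i) (xs ! Suc i))"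
    by simp
  then have "(\<forall>i<Suc m. P (xs ! i) (xs ! (Suc i mod Suc m))) \<longleftrightarrow>
      (\<forall>i<m. P (xs ! i) (xs ! Suc i)) \<and> P (xs ! m) (xs ! 0)"
    by (simp add: All_less_Suc conj_commute)
  moreover have "last xs = xs ! m" "hd xs = xs ! 0"
    using assms by (simp_all add: last_conv_nth hd_conv_nth m_def)
  ultimately show ?thesis
    unfolding successively_conv_nth m by simp
qed

lemma length_filter_gt_1E:
  assumes "1 < length (filter P xs)"
  obtains A x B y D where "xs = A @ x # B @ y # D" "P x" "P y"
proof -
  obtain x y rest where "filter P xs = x # y # rest"
    using assms by (cases "filter P xs"; cases "tl (filter P xs)") auto
  then obtain A ys where "xs = A @ x # ys" "P x" "y # rest = filter P ys"
    by (auto dest: filter_eq_ConsD)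
  moreover obtain B D where "ys = B @ y # D" "P y"
    using filter_eq_ConsD[OF \<open>y # rest = filter P ys\<close>[symmetric]] by blast
  ultimately show ?thesis
    using that by simp
qed

definition linked :: "arc \<Rightarrow> arc \<Rightarrow> bool" where
  "linked e f \<longleftrightarrow> hd_of e = tl_of f"

definition closed_walk :: "arc list \<Rightarrow> bool" where
  "closed_walk C \<longleftrightarrow> successively linked C \<and> linked (last C) (hd C)"

lemma is_cycle_iff_closed_walk:
  "is_cycle n indep v S C \<longleftrightarrow> C \<noteq> [] \<and> (\<forall>e\<in>set C. is_arc n indep v S e) \<and>
    closed_walk C \<and> distinct (map tl_of C)"
  using successively_cyclic_conv_nth[of C linked]
  by (auto simp: is_cycle_def closed_walk_def linked_def)

lemma closed_walk_rotate:
  assumes "X @ Y \<noteq> []"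
  shows "closed_walk (X @ Y) \<longleftrightarrow> closed_walk (Y @ X)"
  using assms unfolding closed_walk_def
  by (cases "X = []"; cases "Y = []") (auto simp: successively_append_iff)

lemma closed_walk_shortcut:
  assumes "closed_walk (e\<^sub>0 # B @ e\<^sub>1 # D)" "tl_of f = tl_of e\<^sub>0" "hd_of f = hd_of e\<^sub>1"
  shows "closed_walk (f # D)"
  using assms unfolding closed_walk_def
  by (cases "D = []") (auto simp: successively_append_iff successively_Cons linked_def)

lemma is_cycle_rotate:
  assumes "is_cycle n indep v S (X @ Y)"
  shows "is_cycle n indep v S (Y @ X)"
  using assms closed_walk_rotate[of X Y] by (auto simp: is_cycle_iff_closed_walk)

lemma min_f_violating_rotate:
  assumes "min_f_violating n indep v S (X @ Y)"
  shows "min_f_violating n indep v S (Y @ X)"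
proof -
  have "ver (Y @ X) = ver (X @ Y)" by (auto simp: ver_def)
  moreover have "f_violating v S (Y @ X) \<longleftrightarrow> f_violating v S (X @ Y)"
    by (simp add: f_violating_def cycle_weight_def add.commute)
  ultimately show ?thesis
    using assms is_cycle_rotate[of n indep v S X Y] by (simp add: min_f_violating_def)
qed

lemma is_cycle_shortcut:
  assumes "is_cycle n indep v S (e\<^sub>0 # B @ e\<^sub>1 # D)" "is_arc n indep v S f"
    and "tl_of f = tl_of e\<^sub>0" "hd_of f = hd_of e\<^sub>1"
  shows "is_cycle n indep v S (f # D)" "ver (f # D) \<subset> ver (e\<^sub>0 # B @ e\<^sub>1 # D)"
proof -
  have distinct: "distinct (map tl_of (e\<^sub>0 # B @ e\<^sub>1 # D))"
    using assms(1) by (simp add: is_cycle_def)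
  then show "is_cycle n indep v S (f # D)"
    using assms closed_walk_shortcut[of e\<^sub>0 B e\<^sub>1 D f] by (auto simp: is_cycle_iff_closed_walk)
  have "tl_of e\<^sub>1 \<notin> ver (f # D)"
    using distinct assms(3) by (auto simp: ver_def)
  then show "ver (f # D) \<subset> ver (e\<^sub>0 # B @ e\<^sub>1 # D)"
    using assms(3) by (auto simp: ver_def)
qed

lemma is_cycle_exchange:
  assumes "is_cycle n indep v S (e\<^sub>0 # B @ e\<^sub>1 # D)"
    and "is_arc n indep v S f\<^sub>0" "tl_of f\<^sub>0 = tl_of e\<^sub>0" "hd_of f\<^sub>0 = hd_of e\<^sub>1"
    and "is_arc n indep v S f\<^sub>1" "tl_of f\<^sub>1 = tl_of e\<^sub>1" "hd_of f\<^sub>1 = hd_of e\<^sub>0"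
  shows "is_cycle n indep v S (f\<^sub>0 # D)" "ver (f\<^sub>0 # D) \<subset> ver (e\<^sub>0 # B @ e\<^sub>1 # D)"
    and "is_cycle n indep v S (f\<^sub>1 # B)" "ver (f\<^sub>1 # B) \<subset> ver (e\<^sub>0 # B @ e\<^sub>1 # D)"
proof -
  show "is_cycle n indep v S (f\<^sub>0 # D)" "ver (f\<^sub>0 # D) \<subset> ver (e\<^sub>0 # B @ e\<^sub>1 # D)"
    using is_cycle_shortcut[OF assms(1-4)] by simp_all
  have "is_cycle n indep v S (e\<^sub>1 # D @ e\<^sub>0 # B)"
    using is_cycle_rotate[of n indep v S "e\<^sub>0 # B" "e\<^sub>1 # D"] assms(1) by simp
  moreover have "ver (e\<^sub>1 # D @ e\<^sub>0 # B) = ver (e\<^sub>0 # B @ e\<^sub>1 # D)"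
    by (auto simp: ver_def)
  ultimately show "is_cycle n indep v S (f\<^sub>1 # B)" "ver (f\<^sub>1 # B) \<subset> ver (e\<^sub>0 # B @ e\<^sub>1 # D)"
    using is_cycle_shortcut[of n indep v S e\<^sub>1 D e\<^sub>0 B f\<^sub>1] assms(5-7) by simp_all
qed

lemma is_arc_TypeII_exchange:
  fixes v :: "nat \<Rightarrow> real^'d"
  assumes "finite S" "det (gram v S) \<noteq> 0"
    and "is_arc n indep v S (u\<^sub>1, b\<^sub>1, TypeII)" "is_arc n indep v S (u\<^sub>2, b\<^sub>2, TypeII)"
    and "nrmsqS v S (v b\<^sub>2) < 1"
  shows "is_arc n indep v S (u\<^sub>1, b\<^sub>2, TypeII)"
proof -
  have "b\<^sub>2 \<in> S"
    using assms(4) by (simp add: is_arc_def)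
  then have "span (v ` (S - {b\<^sub>2})) = UNIV"
    using span_remove_UNIV_if_nrmsqS_less_1[OF assms(1,2) _ assms(5)] by blast
  moreover have "span (v ` (S - {b\<^sub>2})) \<subseteq> span (v ` insert u\<^sub>1 (S - {b\<^sub>2}))"
    by (intro span_mono image_mono) auto
  ultimately show ?thesis
    using assms(3,4) by (auto simp: is_arc_def)
qed

lemma cycle_weight_exchange:
  assumes "arc_weight v S e\<^sub>0 + arc_weight v S e\<^sub>1 = arc_weight v S f\<^sub>0 + arc_weight v S f\<^sub>1"
  shows "cycle_weight v S (e\<^sub>0 # B @ e\<^sub>1 # D) = cycle_weight v S (f\<^sub>0 # D) + cycle_weight v S (f\<^sub>1 # B)"
proof -
  let ?w = "arc_weight v S" and ?W = "\<lambda>L. sum_list (map (arc_weight v S) L)"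
  have "cycle_weight v S (e\<^sub>0 # B @ e\<^sub>1 # D) = (?w e\<^sub>0 + ?w e\<^sub>1) + (?W B + ?W D)"
    by (simp add: cycle_weight_def ac_simps)
  also have "\<dots> = (?w f\<^sub>0 + ?w f\<^sub>1) + (?W B + ?W D)"
    by (simp only: assms)
  also have "\<dots> = cycle_weight v S (f\<^sub>0 # D) + cycle_weight v S (f\<^sub>1 # B)"
    by (simp add: cycle_weight_def ac_simps)
  finally show ?thesis .
qed

lemma min_f_violating_two_TypeII_False:
  fixes v :: "nat \<Rightarrow> real^'d"
  assumes fin: "finite S" and det: "det (gram v S) \<noteq> 0"
    and min: "min_f_violating n indep v S (e\<^sub>0 # B @ e\<^sub>1 # D)"
    and kinds: "kind_of e\<^sub>0 = TypeII" "kind_of e\<^sub>1 = TypeII"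
  shows False
proof -
  define C where "C = e\<^sub>0 # B @ e\<^sub>1 # D"
  obtain u\<^sub>1 b\<^sub>1 u\<^sub>2 b\<^sub>2 where e: "e\<^sub>0 = (u\<^sub>1, b\<^sub>1, TypeII)" "e\<^sub>1 = (u\<^sub>2, b\<^sub>2, TypeII)"
    using kinds by (cases e\<^sub>0, cases e\<^sub>1) (auto simp: kind_of_def)
  have cycle: "is_cycle n indep v S C" and violating: "f_violating v S C"
    using min by (simp_all add: min_f_violating_def C_def)
  have arcs: "is_arc n indep v S e\<^sub>0" "is_arc n indep v S e\<^sub>1"
    using cycle by (auto simp: is_cycle_def C_def)
  have "arc_weight v S e\<^sub>0 \<noteq> \<infinity>" "arc_weight v S e\<^sub>1 \<noteq> \<infinity>"
    using f_violating_arc_weight_finite[OF violating] by (auto simp: C_def)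
  then have below_1: "nrmsqS v S (v b\<^sub>1) < 1" "nrmsqS v S (v b\<^sub>2) < 1"
    using nrmsqS_less_1_if_arc_weight_TypeII_finite[OF fin det] arcs by (auto simp: e is_arc_def)
  define f\<^sub>0 f\<^sub>1 where "f\<^sub>0 = (u\<^sub>1, b\<^sub>2, TypeII)" and "f\<^sub>1 = (u\<^sub>2, b\<^sub>1, TypeII)"
  have new_arcs: "is_arc n indep v S f\<^sub>0" "is_arc n indep v S f\<^sub>1"
    unfolding f\<^sub>0_def f\<^sub>1_def
    using is_arc_TypeII_exchange[OF fin det arcs[unfolded e] below_1(2)]
      is_arc_TypeII_exchange[OF fin det arcs(2,1)[unfolded e] below_1(1)] .
  have smaller: "is_cycle n indep v S (f\<^sub>0 # D)" "ver (f\<^sub>0 # D) \<subset> ver C"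
    "is_cycle n indep v S (f\<^sub>1 # B)" "ver (f\<^sub>1 # B) \<subset> ver C"
    using is_cycle_exchange[OF cycle[unfolded C_def] new_arcs(1) _ _ new_arcs(2)]
    by (simp_all add: C_def e f\<^sub>0_def f\<^sub>1_def tl_of_def hd_of_def)
  have "cycle_weight v S C = cycle_weight v S (f\<^sub>0 # D) + cycle_weight v S (f\<^sub>1 # B)"
    unfolding C_def e f\<^sub>0_def f\<^sub>1_def
    by (intro cycle_weight_exchange arc_weight_TypeII_exchange)
      (use nrmsqS_nonneg[OF fin det] below_1 in auto)
  moreover have "length C = length (f\<^sub>0 # D) + length (f\<^sub>1 # B)"
    by (simp add: C_def)
  ultimately have "f_violating v S (f\<^sub>0 # D) \<or> f_violating v S (f\<^sub>1 # B)"
    using f_violating_split[OF violating] by blast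
  with min smaller show False
    by (auto simp: min_f_violating_def C_def)
qed

theorem mainTheorem5:
  fixes v :: "nat \<Rightarrow> real^'d" and n :: nat and indep :: "nat set \<Rightarrow> bool"
    and S :: "nat set" and C :: "arc list"
  assumes "matroid {0..<n} indep"
    and "is_basis indep S"
    and "det (gram v S) > 0"
    and "min_f_violating n indep v S C"
  shows "length (filter (\<lambda>e. kind_of e = TypeII) C) \<le> 1"
proof (rule ccontr)
  assume "\<not> ?thesis"
  then have "1 < length (filter (\<lambda>e. kind_of e = TypeII) C)"
    by simp
  then obtain A e\<^sub>0 B e\<^sub>1 D where C: "C = A @ e\<^sub>0 # B @ e\<^sub>1 # D"
    and kinds: "kind_of e\<^sub>0 = TypeII" "kind_of e\<^sub>1 = TypeII"
    by (rule length_filter_gt_1E)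
  have fin: "finite S"
    using assms(1,2) finite_subset by (auto simp: is_basis_def matroid_def)
  have "min_f_violating n indep v S (e\<^sub>0 # B @ e\<^sub>1 # (D @ A))"
    using min_f_violating_rotate[of n indep v S A "e\<^sub>0 # B @ e\<^sub>1 # D"] assms(4) C by simp
  from min_f_violating_two_TypeII_False[OF fin _ this kinds] assms(3) show False
    by simp
qed

end
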